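(* Let $G$ be a group and $N$ a fully invariant subgroup of $G$ (i.e. $\phi(N)\subseteq N$ for all $\phi\in\mathrm{End}(G)$; in particular $N$ is normal). For each $\phi\in\mathrm{End}(G)$ and each $\phi$-cellular automaton $\mathcal{T}:A^G\to A^G$, let $\widehat{\mathcal{T}}:A^{G/N}\to A^{G/N}$ be the unique $\hat\phi$-cellular automaton with $\rho^*\circ\widehat{\mathcal{T}}=\mathcal{T}\circ\rho^*$, where $\hat\phi(gN):=\phi(g)N$. Then the map $\mathcal{T}\mapsto\widehat{\mathcal{T}}$ from $\mathrm{GCA}(A^G)$ to $\mathrm{GCA}(A^{G/N})$ is a monoid homomorphism.
   Context: $A$ is a finite set with $|A|\ge 2$. $A^G$ is the set of functions $G\to A$ with shift action $(g\cdot x)(k):=x(g^{-1}k)$. For $\phi\in\mathrm{End}(G)$, a $\phi$-cellular automaton is a map $\mathcal{T}:A^G\to A^G$ for which there exist finite $T\subseteq G$ and $\mu:A^T\to A$ with $\mathcal{T}(x)(h)=\mu((\phi(h^{-1})\cdot x)|_T)$ for all $x,h$. $\mathrm{GCA}(A^G)$ is the monoid (under composition) of all $\phi$-cellular automata $A^G\to A^G$ over all $\phi\in\mathrm{End}(G)$. $\rho:G\to G/N$ is the canonical projection and $\rho^*:A^{G/N}\to A^G$, $\rho^*(x):=x\circ\rho$. *)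

theory Defs
  imports "HOL-Algebra.Algebra" "HOL-Library.FuncSet"
begin

definition configs :: "('h, 'm) monoid_scheme \<Rightarrow> 'a set \<Rightarrow> ('h \<Rightarrow> 'a) set" where
  "configs H A = carrier H \<rightarrow>\<^sub>E A"

definition shift :: "('h, 'm) monoid_scheme \<Rightarrow> 'h \<Rightarrow> ('h \<Rightarrow> 'a) \<Rightarrow> ('h \<Rightarrow> 'a)" where
  "shift H g x = (\<lambda>k\<in>carrier H. x (inv\<^bsub>H\<^esub> g \<otimes>\<^bsub>H\<^esub> k))"

definition phi_CA :: "('h, 'm) monoid_scheme \<Rightarrow> 'a set \<Rightarrow> ('h \<Rightarrow> 'h)
    \<Rightarrow> (('h \<Rightarrow> 'a) \<Rightarrow> ('h \<Rightarrow> 'a)) \<Rightarrow> bool" where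
  "phi_CA H A \<phi> T \<longleftrightarrow>
     T \<in> configs H A \<rightarrow>\<^sub>E configs H A \<and>
     (\<exists>S (\<mu> :: ('h \<Rightarrow> 'a) \<Rightarrow> 'a). finite S \<and> S \<subseteq> carrier H \<and>
        (\<forall>x\<in>configs H A. \<forall>h\<in>carrier H.
           T x h = \<mu> (restrict (shift H (\<phi> (inv\<^bsub>H\<^esub> h)) x) S)))"

definition GCA :: "('h, 'm) monoid_scheme \<Rightarrow> 'a set \<Rightarrow> (('h \<Rightarrow> 'a) \<Rightarrow> ('h \<Rightarrow> 'a)) set" where
  "GCA H A = {T. \<exists>\<phi>\<in>hom H H. phi_CA H A \<phi> T}"

text \<open>rho^*(x) = x o rho, rho(g) = gN (written as the coset N #> g, equal to gN as N is normal).\<close>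
definition rho_star :: "('g, 'm) monoid_scheme \<Rightarrow> 'g set \<Rightarrow> ('g set \<Rightarrow> 'a) \<Rightarrow> ('g \<Rightarrow> 'a)" where
  "rho_star G N y = (\<lambda>g\<in>carrier G. y (N #>\<^bsub>G\<^esub> g))"

definition hatCA :: "('g, 'm) monoid_scheme \<Rightarrow> 'g set \<Rightarrow> 'a set
    \<Rightarrow> (('g \<Rightarrow> 'a) \<Rightarrow> ('g \<Rightarrow> 'a)) \<Rightarrow> (('g set \<Rightarrow> 'a) \<Rightarrow> ('g set \<Rightarrow> 'a))" where
  "hatCA G N A T = (THE S. S \<in> GCA (G Mod N) A \<and>
      (\<forall>y\<in>configs (G Mod N) A. rho_star G N (S y) = T (rho_star G N y)))"

end

theory Submission
  imports Defs
begin

text \<open>Since \<open>\<rho>\<^sup>*\<close> is injective, a generalized cellular automaton over \<open>G/N\<close> that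
  intertwines with \<open>T\<close> through \<open>\<rho>\<^sup>*\<close> is unique, so \<open>hatCA\<close> is well defined as soon as one
  exists. For existence, full invariance lets every endomorphism \<open>\<phi>\<close> of \<open>G\<close> descend to an
  endomorphism of \<open>G/N\<close>, and the local rule \<open>\<mu>\<close> of \<open>T\<close> with memory set \<open>S\<close>, evaluated on
  configurations pulled back along \<open>\<rho>\<close>, is a local rule over \<open>G/N\<close> with memory set \<open>SN/N\<close>.
  The monoid laws then follow from uniqueness: the composite of the induced automata intertwines
  with the composite \<open>T\<^sub>1 \<circ> T\<^sub>2\<close>, and the identity of \<open>A\<^bsup>G/N\<^esup>\<close> with the identity of \<open>A\<^bsup>G\<^esup>\<close>.\<close>

lemma restrict_shift_endo:
  fixes H (structure)
  assumes "group H" "\<phi> \<in> hom H H" "h \<in> carrier H" "S \<subseteq> carrier H"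
  shows "restrict (shift H (\<phi> (inv h)) x) S = (\<lambda>t\<in>S. x (\<phi> h \<otimes> t))"
proof -
  interpret group_hom H H \<phi>
    using assms by (simp add: group_hom_def group_hom_axioms_def)
  show ?thesis
    using assms(3,4) by (intro restrict_ext) (auto simp: shift_def)
qed

text \<open>For an endomorphism, \<open>\<phi>(h\<inverse>)\<inverse> = \<phi> h\<close>, so the defining equation of a
  \<open>\<phi>\<close>-cellular automaton can be stated without inverses.\<close>

lemma phi_CA_iff_local_rule:
  fixes H (structure)
  assumes "group H" "\<phi> \<in> hom H H"
  shows "phi_CA H A \<phi> T \<longleftrightarrow> T \<in> configs H A \<rightarrow>\<^sub>E configs H A \<and>
    (\<exists>S \<mu>. finite S \<and> S \<subseteq> carrier H \<and>
       (\<forall>x\<in>configs H A. \<forall>h\<in>carrier H. T x h = \<mu> (\<lambda>t\<in>S. x (\<phi> h \<otimes> t))))"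
proof -
  have "(T x h = \<mu> (restrict (shift H (\<phi> (inv h)) x) S)) = (T x h = \<mu> (\<lambda>t\<in>S. x (\<phi> h \<otimes> t)))"
    if "h \<in> carrier H" "S \<subseteq> carrier H" for x h S \<mu>
    by (simp only: restrict_shift_endo[OF assms that])
  then show ?thesis
    unfolding phi_CA_def by (intro conj_cong refl ex_cong1 ball_cong) blast+
qed

lemma phi_CA_compose:
  fixes H (structure)
  assumes H: "group H" and \<phi>: "\<phi> \<in> hom H H" and \<psi>: "\<psi> \<in> hom H H"
    and T1: "phi_CA H A \<phi> T1" and T2: "phi_CA H A \<psi> T2"
  shows "phi_CA H A (\<psi> \<circ> \<phi>) (compose (configs H A) T1 T2)"
proof -
  interpret group H by fact
  obtain S1 \<mu>1 where S1: "finite S1" "S1 \<subseteq> carrier H"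
    and T1_rule: "\<And>x h. x \<in> configs H A \<Longrightarrow> h \<in> carrier H \<Longrightarrow> T1 x h = \<mu>1 (\<lambda>s\<in>S1. x (\<phi> h \<otimes> s))"
    and T1_maps: "T1 \<in> configs H A \<rightarrow>\<^sub>E configs H A"
    using T1 unfolding phi_CA_iff_local_rule[OF H \<phi>] by blast
  obtain S2 \<mu>2 where S2: "finite S2" "S2 \<subseteq> carrier H"
    and T2_rule: "\<And>x h. x \<in> configs H A \<Longrightarrow> h \<in> carrier H \<Longrightarrow> T2 x h = \<mu>2 (\<lambda>t\<in>S2. x (\<psi> h \<otimes> t))"
    and T2_maps: "T2 \<in> configs H A \<rightarrow>\<^sub>E configs H A"
    using T2 unfolding phi_CA_iff_local_rule[OF H \<psi>] by blast
  have \<phi>_closed: "\<phi> h \<in> carrier H" and \<psi>_closed: "\<psi> h \<in> carrier H" if "h \<in> carrier H" for h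
    using that \<phi> \<psi> by (simp_all add: hom_in_carrier)
  define S where "S = (\<lambda>(s, t). \<psi> s \<otimes> t) ` (S1 \<times> S2)"
  define \<mu> where "\<mu> = (\<lambda>z. \<mu>1 (\<lambda>s\<in>S1. \<mu>2 (\<lambda>t\<in>S2. z (\<psi> s \<otimes> t))))"
  have rule: "compose (configs H A) T1 T2 x h = \<mu> (\<lambda>u\<in>S. x ((\<psi> \<circ> \<phi>) h \<otimes> u))"
    if x: "x \<in> configs H A" and h: "h \<in> carrier H" for x h
  proof -
    have "T2 x \<in> configs H A"
      using x T2_maps by blast
    then have "compose (configs H A) T1 T2 x h = \<mu>1 (\<lambda>s\<in>S1. T2 x (\<phi> h \<otimes> s))"
      using x h by (simp add: compose_def T1_rule)
    also have "(\<lambda>s\<in>S1. T2 x (\<phi> h \<otimes> s)) = (\<lambda>s\<in>S1. \<mu>2 (\<lambda>t\<in>S2. x (\<psi> (\<phi> h \<otimes> s) \<otimes> t)))"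
      using x h S1 \<phi>_closed by (intro restrict_ext) (auto simp: T2_rule)
    also have "\<dots> = (\<lambda>s\<in>S1. \<mu>2 (\<lambda>t\<in>S2. x ((\<psi> \<circ> \<phi>) h \<otimes> (\<psi> s \<otimes> t))))"
    proof (intro restrict_ext arg_cong[where f = \<mu>2])
      fix s t assume "s \<in> S1" "t \<in> S2"
      then have "s \<in> carrier H" "t \<in> carrier H"
        using S1 S2 by auto
      then show "x (\<psi> (\<phi> h \<otimes> s) \<otimes> t) = x ((\<psi> \<circ> \<phi>) h \<otimes> (\<psi> s \<otimes> t))"
        using h \<psi> \<phi>_closed \<psi>_closed by (simp add: hom_mult m_assoc)
    qed
    also have "\<dots> = (\<lambda>s\<in>S1. \<mu>2 (\<lambda>t\<in>S2. (\<lambda>u\<in>S. x ((\<psi> \<circ> \<phi>) h \<otimes> u)) (\<psi> s \<otimes> t)))"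
      by (intro restrict_ext arg_cong[where f = \<mu>2]) (auto simp: S_def)
    finally show ?thesis
      unfolding \<mu>_def .
  qed
  have "finite S" "S \<subseteq> carrier H"
    using S1 S2 \<psi>_closed by (auto simp: S_def)
  moreover have "compose (configs H A) T1 T2 \<in> configs H A \<rightarrow>\<^sub>E configs H A"
    using T1_maps T2_maps by (auto simp: compose_def)
  ultimately show ?thesis
    unfolding phi_CA_iff_local_rule[OF H Group.hom_compose[OF \<phi> \<psi>]] using rule by blast
qed

lemma phi_CA_id:
  fixes H (structure)
  assumes "group H"
  shows "phi_CA H A (\<lambda>h. h) (\<lambda>x\<in>configs H A. x)"
proof -
  interpret group H by fact
  have "\<forall>x\<in>configs H A. \<forall>h\<in>carrier H. (\<lambda>x\<in>configs H A. x) x h = (\<lambda>t\<in>{\<one>}. x (h \<otimes> t)) \<one>"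
    by simp
  then show ?thesis
    unfolding phi_CA_iff_local_rule[OF assms iso_set_refl[THEN iso_imp_homomorphism]]
    by (intro conjI exI[of _ "{\<one>}"] exI[of _ "\<lambda>z. z \<one>"]) auto
qed

lemma GCA_compose:
  assumes "group H" "T1 \<in> GCA H A" "T2 \<in> GCA H A"
  shows "compose (configs H A) T1 T2 \<in> GCA H A"
  using assms phi_CA_compose hom_compose unfolding GCA_def by blast

lemma GCA_id:
  assumes "group H"
  shows "(\<lambda>x\<in>configs H A. x) \<in> GCA H A"
  using phi_CA_id[OF assms] iso_set_refl[THEN iso_imp_homomorphism] unfolding GCA_def by blast

lemma (in group) fully_invariant_imp_normal:
  assumes "subgroup N G" "\<forall>\<phi>\<in>hom G G. \<phi> ` N \<subseteq> N"
  shows "N \<lhd> G"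
proof -
  have "x \<otimes> n \<otimes> inv x \<in> N" if x: "x \<in> carrier G" and n: "n \<in> N" for x n
  proof -
    have "(\<lambda>z. x \<otimes> z \<otimes> inv x) \<in> hom G G"
      using x by (intro homI) (simp_all add: m_assoc flip: m_assoc[of "inv x" x])
    then have "(\<lambda>z. x \<otimes> z \<otimes> inv x) ` N \<subseteq> N"
      by (rule bspec[OF assms(2)])
    then show ?thesis
      using n by (rule subsetD[OF _ imageI])
  qed
  then show ?thesis
    using assms(1) by (intro normal_inv_iff[THEN iffD2] conjI ballI)
qed

text \<open>The candidate for \<open>hatCA G N A T\<close>, given an endomorphism \<open>\<phi>'\<close> of \<open>G/N\<close> induced by
  \<open>\<phi>\<close> and a local rule \<open>(S, \<mu>)\<close> of \<open>T\<close>: at the coset \<open>C\<close> it applies \<open>\<mu>\<close> to the values of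
  \<open>y\<close> on the cosets \<open>\<phi>'(C) \<cdot> sN\<close>, \<open>s \<in> S\<close>.\<close>

definition quotient_CA :: "('g, 'm) monoid_scheme \<Rightarrow> 'g set \<Rightarrow> 'a set \<Rightarrow> ('g set \<Rightarrow> 'g set)
    \<Rightarrow> 'g set \<Rightarrow> (('g \<Rightarrow> 'a) \<Rightarrow> 'a) \<Rightarrow> ('g set \<Rightarrow> 'a) \<Rightarrow> ('g set \<Rightarrow> 'a)" where
  "quotient_CA G N A \<phi>' S \<mu> = (\<lambda>y\<in>configs (G Mod N) A. \<lambda>C\<in>carrier (G Mod N).
     \<mu> (\<lambda>s\<in>S. y (\<phi>' C \<otimes>\<^bsub>G Mod N\<^esub> (N #>\<^bsub>G\<^esub> s))))"

context normal
begin

lemma rho_star_configs: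
  assumes "y \<in> configs (G Mod H) A"
  shows "rho_star G H y \<in> configs G A"
  using assms subset unfolding rho_star_def configs_def FactGroup_def
  by (auto intro: rcosetsI)

lemma inj_on_rho_star: "inj_on (rho_star G H) (configs (G Mod H) A)"
proof (rule inj_onI)
  fix y z
  assume y: "y \<in> configs (G Mod H) A" and z: "z \<in> configs (G Mod H) A"
    and eq: "rho_star G H y = rho_star G H z"
  have "y (H #> g) = z (H #> g)" if "g \<in> carrier G" for g
    using fun_cong[OF eq, of g] that by (simp add: rho_star_def)
  then have "y C = z C" if "C \<in> carrier (G Mod H)" for C
    using that by (auto simp: carrier_FactGroup)
  then show "y = z"
    using y z unfolding configs_def by (metis PiE_ext)
qed

lemma hatCA_eqI:
  assumes "S \<in> GCA (G Mod H) A"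
    and "\<forall>y\<in>configs (G Mod H) A. rho_star G H (S y) = T (rho_star G H y)"
  shows "hatCA G H A T = S"
  unfolding hatCA_def
proof (rule the_equality)
  fix S'
  assume S': "S' \<in> GCA (G Mod H) A \<and>
    (\<forall>y\<in>configs (G Mod H) A. rho_star G H (S' y) = T (rho_star G H y))"
  have maps: "S \<in> configs (G Mod H) A \<rightarrow>\<^sub>E configs (G Mod H) A"
    "S' \<in> configs (G Mod H) A \<rightarrow>\<^sub>E configs (G Mod H) A"
    using assms(1) S' unfolding GCA_def phi_CA_def by auto
  have "S' y = S y" if "y \<in> configs (G Mod H) A" for y
    using that maps assms(2) S' by (intro inj_onD[OF inj_on_rho_star]) auto
  then show "S' = S"
    using maps by (metis PiE_ext)
qed (use assms in blast)

lemma induced_endomorphism: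
  assumes "\<phi> \<in> hom G G" "\<phi> ` H \<subseteq> H"
  obtains \<phi>' where "\<phi>' \<in> hom (G Mod H) (G Mod H)"
    and "\<And>g. g \<in> carrier G \<Longrightarrow> \<phi>' (H #> g) = H #> \<phi> g"
proof -
  have "(\<lambda>g. H #> \<phi> g) \<in> hom G (G Mod H)"
    using Group.hom_compose[OF assms(1) r_coset_hom_Mod] by (simp add: comp_def)
  moreover have "H #> \<phi> x = H #> \<phi> y"
    if xy: "x \<in> carrier G" "y \<in> carrier G" "H #> x = H #> y" for x y
  proof -
    obtain n where n: "n \<in> H" "y = n \<otimes> x"
      using repr_independenceD[OF is_subgroup xy(2,3)] unfolding r_coset_def by blast
    then have "\<phi> y = \<phi> n \<otimes> \<phi> x" "\<phi> n \<in> H"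
      using assms xy(1) subset by (auto simp: hom_mult)
    then show ?thesis
      using xy(1) assms(1) subset
      by (simp add: coset_mult_assoc[symmetric] rcos_const[OF is_group] hom_in_carrier)
  qed
  ultimately show ?thesis
    using that FactGroup_universal[OF _ normal_axioms] by metis
qed

lemma quotient_CA_coset:
  assumes \<phi>': "\<And>g. g \<in> carrier G \<Longrightarrow> \<phi>' (H #> g) = H #> \<phi> g" and \<phi>: "\<phi> \<in> hom G G"
    and S: "S \<subseteq> carrier G" and y: "y \<in> configs (G Mod H) A" and g: "g \<in> carrier G"
  shows "quotient_CA G H A \<phi>' S \<mu> y (H #> g) = \<mu> (\<lambda>s\<in>S. rho_star G H y (\<phi> g \<otimes> s))"
proof -
  have "(\<lambda>s\<in>S. y (\<phi>' (H #> g) \<otimes>\<^bsub>G Mod H\<^esub> (H #> s))) = (\<lambda>s\<in>S. rho_star G H y (\<phi> g \<otimes> s))"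
    using S g \<phi> by (intro restrict_ext) (auto simp: \<phi>' rcos_sum rho_star_def hom_in_carrier)
  then show ?thesis
    using y g by (simp add: quotient_CA_def carrier_FactGroup)
qed

lemma rho_star_quotient_CA:
  assumes \<phi>': "\<And>g. g \<in> carrier G \<Longrightarrow> \<phi>' (H #> g) = H #> \<phi> g" and \<phi>: "\<phi> \<in> hom G G"
    and S: "S \<subseteq> carrier G"
    and T_rule: "\<forall>x\<in>configs G A. \<forall>h\<in>carrier G. T x h = \<mu> (\<lambda>t\<in>S. x (\<phi> h \<otimes> t))"
    and T_maps: "T \<in> configs G A \<rightarrow>\<^sub>E configs G A"
    and y: "y \<in> configs (G Mod H) A"
  shows "rho_star G H (quotient_CA G H A \<phi>' S \<mu> y) = T (rho_star G H y)"
proof (rule extensionalityI[of _ "carrier G"])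
  have "T (rho_star G H y) \<in> configs G A"
    using T_maps rho_star_configs[OF y] by blast
  then show "T (rho_star G H y) \<in> extensional (carrier G)"
    by (simp add: configs_def PiE_iff)
  fix g
  assume "g \<in> carrier G"
  then show "rho_star G H (quotient_CA G H A \<phi>' S \<mu> y) g = T (rho_star G H y) g"
    using quotient_CA_coset[OF \<phi>' \<phi> S y] T_rule rho_star_configs[OF y]
    by (simp add: rho_star_def)
qed (simp add: rho_star_def)

lemma quotient_CA_phi_CA:
  assumes \<phi>'_hom: "\<phi>' \<in> hom (G Mod H) (G Mod H)"
    and \<phi>': "\<And>g. g \<in> carrier G \<Longrightarrow> \<phi>' (H #> g) = H #> \<phi> g" and \<phi>: "\<phi> \<in> hom G G"
    and S: "finite S" "S \<subseteq> carrier G"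
    and T_rule: "\<forall>x\<in>configs G A. \<forall>h\<in>carrier G. T x h = \<mu> (\<lambda>t\<in>S. x (\<phi> h \<otimes> t))"
    and T_maps: "T \<in> configs G A \<rightarrow>\<^sub>E configs G A"
  shows "phi_CA (G Mod H) A \<phi>' (quotient_CA G H A \<phi>' S \<mu>)"
proof -
  let ?T' = "quotient_CA G H A \<phi>' S \<mu>"
  define S' where "S' = (\<lambda>s. H #> s) ` S"
  define \<mu>' where "\<mu>' = (\<lambda>w. \<mu> (\<lambda>s\<in>S. w (H #> s)))"
  have "?T' y \<in> configs (G Mod H) A" if y: "y \<in> configs (G Mod H) A" for y
  proof -
    have "?T' y (H #> g) \<in> A" if "g \<in> carrier G" for g
    proof -
      have "?T' y (H #> g) = T (rho_star G H y) g"
        using rho_star_quotient_CA[OF \<phi>' \<phi> S(2) T_rule T_maps y, THEN fun_cong, of g] that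
        by (simp add: rho_star_def)
      then show ?thesis
        using T_maps rho_star_configs[OF y] that unfolding configs_def by auto
    qed
    then show ?thesis
      unfolding configs_def
      by (intro PiE_I) (auto simp: quotient_CA_def y carrier_FactGroup)
  qed
  then have "?T' \<in> configs (G Mod H) A \<rightarrow>\<^sub>E configs (G Mod H) A"
    by (simp add: quotient_CA_def)
  moreover have "finite S'" "S' \<subseteq> carrier (G Mod H)"
    using S by (auto simp: S'_def carrier_FactGroup)
  moreover have "?T' y C = \<mu>' (\<lambda>D\<in>S'. y (\<phi>' C \<otimes>\<^bsub>G Mod H\<^esub> D))"
    if "y \<in> configs (G Mod H) A" "C \<in> carrier (G Mod H)" for y C
    using that by (simp add: quotient_CA_def \<mu>'_def S'_def cong: restrict_cong)
  ultimately show ?thesis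
    unfolding phi_CA_iff_local_rule[OF factorgroup_is_group \<phi>'_hom] by blast
qed

lemma hatCA_intertwines:
  assumes fully_invariant: "\<forall>\<phi>\<in>hom G G. \<phi> ` H \<subseteq> H" and T: "T \<in> GCA G A"
  shows "hatCA G H A T \<in> GCA (G Mod H) A"
    and "\<forall>y\<in>configs (G Mod H) A. rho_star G H (hatCA G H A T y) = T (rho_star G H y)"
proof -
  obtain \<phi> where \<phi>: "\<phi> \<in> hom G G" and "phi_CA G A \<phi> T"
    using T unfolding GCA_def by blast
  then obtain S \<mu> where S: "finite S" "S \<subseteq> carrier G"
    and T_rule: "\<forall>x\<in>configs G A. \<forall>h\<in>carrier G. T x h = \<mu> (\<lambda>t\<in>S. x (\<phi> h \<otimes> t))"
    and T_maps: "T \<in> configs G A \<rightarrow>\<^sub>E configs G A"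
    unfolding phi_CA_iff_local_rule[OF is_group \<phi>] by blast
  obtain \<phi>' where \<phi>'_hom: "\<phi>' \<in> hom (G Mod H) (G Mod H)"
    and \<phi>': "\<And>g. g \<in> carrier G \<Longrightarrow> \<phi>' (H #> g) = H #> \<phi> g"
    using induced_endomorphism[OF \<phi>] fully_invariant \<phi> by blast
  have GCA: "quotient_CA G H A \<phi>' S \<mu> \<in> GCA (G Mod H) A"
    using quotient_CA_phi_CA[OF \<phi>'_hom \<phi>' \<phi> S T_rule T_maps] \<phi>'_hom unfolding GCA_def by blast
  moreover have intertwines: "\<forall>y\<in>configs (G Mod H) A.
      rho_star G H (quotient_CA G H A \<phi>' S \<mu> y) = T (rho_star G H y)"
    using rho_star_quotient_CA[OF \<phi>' \<phi> S(2) T_rule T_maps] by blast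
  ultimately have "hatCA G H A T = quotient_CA G H A \<phi>' S \<mu>"
    by (rule hatCA_eqI)
  with GCA intertwines show "hatCA G H A T \<in> GCA (G Mod H) A"
    and "\<forall>y\<in>configs (G Mod H) A. rho_star G H (hatCA G H A T y) = T (rho_star G H y)"
    by simp_all
qed

lemma hatCA_compose:
  assumes fully_invariant: "\<forall>\<phi>\<in>hom G G. \<phi> ` H \<subseteq> H"
    and T1: "T1 \<in> GCA G A" and T2: "T2 \<in> GCA G A"
  shows "hatCA G H A (compose (configs G A) T1 T2)
    = compose (configs (G Mod H) A) (hatCA G H A T1) (hatCA G H A T2)"
proof (rule hatCA_eqI)
  note hat1 = hatCA_intertwines[OF fully_invariant T1]
    and hat2 = hatCA_intertwines[OF fully_invariant T2]
  show "compose (configs (G Mod H) A) (hatCA G H A T1) (hatCA G H A T2) \<in> GCA (G Mod H) A"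
    using GCA_compose[OF factorgroup_is_group hat1(1) hat2(1)] .
  have maps: "hatCA G H A T2 y \<in> configs (G Mod H) A" if "y \<in> configs (G Mod H) A" for y
    using hat2(1) that unfolding GCA_def phi_CA_def by blast
  show "\<forall>y\<in>configs (G Mod H) A.
      rho_star G H (compose (configs (G Mod H) A) (hatCA G H A T1) (hatCA G H A T2) y)
      = compose (configs G A) T1 T2 (rho_star G H y)"
    using hat1(2) hat2(2) maps by (simp add: compose_def rho_star_configs)
qed

lemma hatCA_id: "hatCA G H A (\<lambda>x\<in>configs G A. x) = (\<lambda>y\<in>configs (G Mod H) A. y)"
  by (rule hatCA_eqI) (simp_all add: GCA_id[OF factorgroup_is_group] rho_star_configs)

end

theorem corollary4p4:
  fixes G :: "('g, 'm) monoid_scheme" and N :: "'g set" and A :: "'a set"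
  assumes "group G"
    and "finite A" and "card A \<ge> 2"
    and "subgroup N G"
    and "\<forall>\<phi>\<in>hom G G. \<phi> ` N \<subseteq> N"
  shows "hatCA G N A \<in> GCA G A \<rightarrow> GCA (G Mod N) A
    \<and> (\<forall>T1\<in>GCA G A. \<forall>T2\<in>GCA G A.
           hatCA G N A (compose (configs G A) T1 T2)
             = compose (configs (G Mod N) A) (hatCA G N A T1) (hatCA G N A T2))
    \<and> hatCA G N A (\<lambda>x\<in>configs G A. x) = (\<lambda>y\<in>configs (G Mod N) A. y)"
proof -
  interpret group G by fact
  interpret normal N G
    by (rule fully_invariant_imp_normal[OF assms(4,5)])
  show ?thesis
    using hatCA_intertwines(1)[OF assms(5)] hatCA_compose[OF assms(5)] hatCA_id
    by blast
qed

end
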